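(* For $\theta\in\mathbb R$ let $\mathbb R_{n,\theta}$ be the probability distribution on $S_n$ with $\mathbb R_{n,\theta}(\pi)=e^{\theta N_n(\pi,e_n)-Z_n(\theta)}$, where $e_n$ is the identity, $N_n(\pi,e_n)=\sum_{i=1}^n1\{\pi(i)=i\}$ is the number of fixed points, and $Z_n(\theta)$ is the log normalizing constant. Let $\pi_n\sim\mathbb R_{n,\theta}$. Then for every $\theta\ne0$: (a) $N_n(\pi_n,e_n)$ converges to a Poisson random variable with mean $e^\theta$ in distribution and in moments; (b) $\pi_n$ converges in probability to the uniform distribution on $[0,1]^2$; (c) $\dfrac{\mathbb R_{n,\theta}(\pi_n(1)=1,\pi_n(2)=2)}{\mathbb R_{n,\theta}(\pi_n(1)=2,\pi_n(2)=1)}=e^{2\theta}\ne1$.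
   Context: A sequence of random permutations $\pi_n$ converges in probability to a deterministic probability measure $\mu$ on $[0,1]^2$ if for every continuous $f$ on $[0,1]^2$, $\frac1n\sum_{i=1}^n f(i/n,\pi_n(i)/n)\to\int f\,d\mu$ in probability. *)

theory Defs
  imports "HOL-Probability.Probability" "HOL-Combinatorics.Permutations"
begin

text \<open>Permutations of [n] = {1..n} are functions nat => nat with pi permutes {1..n}.\<close>

definition fixpts :: "nat \<Rightarrow> (nat \<Rightarrow> nat) \<Rightarrow> nat" where
  "fixpts n \<pi> = card {i \<in> {1..n}. \<pi> i = i}"

definition logZ :: "nat \<Rightarrow> real \<Rightarrow> real" where
  "logZ n \<theta> = ln (\<Sum>\<sigma>\<in>{\<sigma>. \<sigma> permutes {1..n}}. exp (\<theta> * real (fixpts n \<sigma>)))"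

definition R_pmf :: "nat \<Rightarrow> real \<Rightarrow> (nat \<Rightarrow> nat) pmf" where
  "R_pmf n \<theta> = embed_pmf (\<lambda>\<pi>. if \<pi> permutes {1..n}
      then exp (\<theta> * real (fixpts n \<pi>) - logZ n \<theta>) else 0)"

definition conv_prob_uniform :: "(nat \<Rightarrow> (nat \<Rightarrow> nat) pmf) \<Rightarrow> bool" where
  "conv_prob_uniform P \<longleftrightarrow>
    (\<forall>f :: real \<times> real \<Rightarrow> real. continuous_on (cbox (0,0) (1,1)) f \<longrightarrow>
      (\<forall>\<epsilon>>0. (\<lambda>n. measure_pmf.prob (P n)
          {\<pi>. \<bar>(1 / real n) * (\<Sum>i=1..n. f (real i / real n, real (\<pi> i) / real n))
                 - integral (cbox (0,0) (1,1)) f\<bar> > \<epsilon>}) \<longlonglongrightarrow> 0))"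

end

theory Submission
  imports Defs
begin

text \<open>Sorting the permutations of \<open>{1..n}\<close> by their fixed-point sets shows that exactly
  \<open>n!/j! * d (n - j)\<close> of them have \<open>j\<close> fixed points, where \<open>d m = (\<Sum>i\<le>m. (-1)^i / i!)\<close> is the
  proportion of derangements of an \<open>m\<close>-set and tends to \<open>exp (-1)\<close>. So for every \<open>g\<close> the
  \<open>R\<^sub>n\<^sub>,\<^sub>\<theta>\<close>-expectation of \<open>g (N\<^sub>n)\<close> is a ratio of two sums \<open>\<Sum>j\<le>n. c j * d (n - j)\<close>, and
  Tannery's theorem turns this ratio into the Poisson expectation of \<open>g\<close> with mean \<open>exp \<theta>\<close>;
  taking \<open>g\<close> a power or an indicator gives (a).

  For (b), Cauchy--Schwarz against the uniform measure bounds \<open>R\<^sub>n\<^sub>,\<^sub>\<theta>(A)\<^sup>2\<close> by a bounded factor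
  times the uniform probability of \<open>A\<close>. Under the uniform measure the permutation Riemann sum
  of \<open>f\<close> has mean the full grid Riemann sum and variance \<open>O(1/n)\<close>, and the grid Riemann sums
  converge to the integral of \<open>f\<close>.

  For (c), \<open>\<pi> \<mapsto> \<pi> \<circ> (1 2)\<close> maps the permutations swapping 1 and 2 bijectively onto those fixing
  both and adds exactly two fixed points.\<close>

section \<open>Derangements\<close>

definition fixed_points :: "'a set \<Rightarrow> ('a \<Rightarrow> 'a) \<Rightarrow> 'a set" where
  "fixed_points S \<pi> = {x\<in>S. \<pi> x = x}"

definition derangements :: "'a set \<Rightarrow> ('a \<Rightarrow> 'a) set" where
  "derangements A = {\<sigma>. \<sigma> permutes A \<and> (\<forall>x\<in>A. \<sigma> x \<noteq> x)}"

definition derangement_fraction :: "nat \<Rightarrow> real" where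
  "derangement_fraction m = (\<Sum>i\<le>m. (-1)^i / fact i)"

lemma sum_alternating_inverse_facts:
  "(\<Sum>j\<le>k. (-1::real)^(k-j) / (fact (k-j) * fact j)) = (if k = 0 then 1 else 0)"
proof -
  have "(\<Sum>j\<le>k. (-1::real)^(k-j) / (fact (k-j) * fact j))
      = (\<Sum>j\<le>k. of_nat (k choose j) * 1^j * (-1::real)^(k-j)) / fact k"
    unfolding sum_divide_distrib
    by (intro sum.cong refl) (simp add: binomial_fact field_simps)
  also have "\<dots> = (1 + (-1::real))^k / fact k"
    by (subst binomial_ring) simp
  finally show ?thesis by simp
qed

text \<open>The Cauchy product of the series of \<open>exp (-1)\<close> and \<open>exp 1\<close>, truncated at \<open>m\<close>.\<close>
lemma derangement_fraction_convolution: "(\<Sum>j\<le>m. derangement_fraction (m-j) / fact j) = 1"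
proof -
  define g where "g = (\<lambda>j i. (-1::real)^i / (fact i * fact j))"
  have "(\<Sum>j\<le>m. derangement_fraction (m-j) / fact j) = (\<Sum>j\<le>m. \<Sum>i\<le>m-j. g j i)"
    unfolding derangement_fraction_def g_def sum_divide_distrib by (simp add: field_simps)
  also have "\<dots> = (\<Sum>(j,i)\<in>(SIGMA j:{..m}. {..m-j}). g j i)"
    by (simp add: sum.Sigma)
  also have "(SIGMA j:{..m}. {..m-j}) = {(j,i). j+i \<le> m}" by auto
  also have "(\<Sum>(j,i)\<in>{(j,i). j+i \<le> m}. g j i) = (\<Sum>k\<le>m. \<Sum>j\<le>k. g j (k-j))"
    by (rule sum.triangle_reindex_eq)
  also have "\<dots> = (\<Sum>k\<le>m. (if k = 0 then 1 else 0))"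
    unfolding g_def using sum_alternating_inverse_facts by (intro sum.cong refl) (simp add: mult.commute)
  also have "\<dots> = 1" by (simp add: sum.delta)
  finally show ?thesis .
qed

lemma derangement_fraction_LIMSEQ: "derangement_fraction \<longlonglongrightarrow> exp (-1)"
proof -
  have "(\<lambda>n. (-1::real)^n / fact n) sums exp (-1)"
    using exp_converges[of "-1::real"] by (simp add: divide_inverse scaleR_conv_of_real mult.commute)
  hence "(\<lambda>n. \<Sum>i<Suc n. (-1::real)^i / fact i) \<longlonglongrightarrow> exp (-1)"
    by (intro LIMSEQ_Suc) (simp add: sums_def)
  thus ?thesis unfolding derangement_fraction_def lessThan_Suc_atMost .
qed

lemma permutes_fixed_points_eq_derangements:
  assumes "F \<subseteq> S"
  shows "{\<pi>. \<pi> permutes S \<and> fixed_points S \<pi> = F} = derangements (S - F)"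
proof (intro equalityI subsetI)
  fix \<pi> assume "\<pi> \<in> {\<pi>. \<pi> permutes S \<and> fixed_points S \<pi> = F}"
  hence p: "\<pi> permutes S" and F: "F = fixed_points S \<pi>" by auto
  have "\<pi> permutes (S - F)"
    using p unfolding F permutes_def fixed_points_def by auto
  thus "\<pi> \<in> derangements (S - F)" unfolding derangements_def F fixed_points_def by auto
next
  fix \<pi> assume "\<pi> \<in> derangements (S - F)"
  hence p: "\<pi> permutes (S - F)" and d: "\<forall>x\<in>S - F. \<pi> x \<noteq> x" unfolding derangements_def by auto
  have "fixed_points S \<pi> = F"
    using d permutes_not_in[OF p] assms unfolding fixed_points_def by auto
  with permutes_subset[OF p] show "\<pi> \<in> {\<pi>. \<pi> permutes S \<and> fixed_points S \<pi> = F}" by auto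
qed

lemma sum_permutes_by_fixed_points:
  fixes h :: "'a set \<Rightarrow> real"
  assumes S: "finite S"
  shows "(\<Sum>\<pi>\<in>{\<pi>. \<pi> permutes S}. h (fixed_points S \<pi>))
       = (\<Sum>F\<in>Pow S. real (card (derangements (S - F))) * h F)"
proof -
  have "(\<Sum>\<pi>\<in>{\<pi>. \<pi> permutes S}. h (fixed_points S \<pi>))
      = (\<Sum>F\<in>Pow S. \<Sum>\<pi>\<in>{\<pi>\<in>{\<pi>. \<pi> permutes S}. fixed_points S \<pi> = F}. h (fixed_points S \<pi>))"
    by (rule sum.group[symmetric]) (auto simp: S finite_permutations fixed_points_def)
  also have "\<dots> = (\<Sum>F\<in>Pow S. real (card (derangements (S - F))) * h F)"
  proof (intro sum.cong refl)
    fix F assume "F \<in> Pow S"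
    hence "{\<pi>\<in>{\<pi>. \<pi> permutes S}. fixed_points S \<pi> = F} = derangements (S - F)"
      using permutes_fixed_points_eq_derangements[of F S] by auto
    moreover have "(\<Sum>\<pi>\<in>{\<pi>\<in>{\<pi>. \<pi> permutes S}. fixed_points S \<pi> = F}. h (fixed_points S \<pi>))
        = (\<Sum>\<pi>\<in>{\<pi>\<in>{\<pi>. \<pi> permutes S}. fixed_points S \<pi> = F}. h F)"
      by (rule sum.cong) auto
    ultimately show "(\<Sum>\<pi>\<in>{\<pi>\<in>{\<pi>. \<pi> permutes S}. fixed_points S \<pi> = F}. h (fixed_points S \<pi>))
        = real (card (derangements (S - F))) * h F" by simp
  qed
  finally show ?thesis .
qed

lemma sum_Pow_by_card:
  fixes g :: "nat \<Rightarrow> real"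
  assumes A: "finite A"
  shows "(\<Sum>F\<in>Pow A. g (card F)) = (\<Sum>j\<le>card A. real (card A choose j) * g j)"
proof -
  have "(\<Sum>F\<in>Pow A. g (card F)) = (\<Sum>j\<le>card A. \<Sum>F\<in>{F\<in>Pow A. card F = j}. g (card F))"
    by (rule sum.group[symmetric]) (auto simp: A card_mono)
  also have "\<dots> = (\<Sum>j\<le>card A. real (card A choose j) * g j)"
  proof (intro sum.cong refl)
    fix j
    have "{F\<in>Pow A. card F = j} = {F. F \<subseteq> A \<and> card F = j}" by auto
    thus "(\<Sum>F\<in>{F\<in>Pow A. card F = j}. g (card F)) = real (card A choose j) * g j"
      using n_subsets[OF A, of j] by simp
  qed
  finally show ?thesis .
qed

text \<open>Sorting the permutations of \<open>A\<close> by their fixed-point sets gives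
  \<open>m! = (\<Sum>j\<le>m. (m choose j) * D (m - j))\<close> for the derangement numbers \<open>D\<close>, a recursion
  that the closed form solves by \<open>derangement_fraction_convolution\<close>.\<close>
lemma card_derangements:
  assumes "finite A"
  shows "real (card (derangements A)) = fact (card A) * derangement_fraction (card A)"
  using assms
proof (induction "card A" arbitrary: A rule: less_induct)
  case less
  define m where "m = card A"
  define d where "d = (\<lambda>j. if j = 0 then real (card (derangements A))
                           else fact (m - j) * derangement_fraction (m - j))"
  have smaller: "real (card (derangements (A - F))) = d (card F)" if F: "F \<in> Pow A" for F
  proof (cases "F = {}")
    case False
    have "finite F" using F less.prems finite_subset by auto
    hence "card F \<noteq> 0" "card F \<le> m" "card (A - F) = m - card F"
      using F False less.prems by (auto simp: m_def card_Diff_subset card_mono)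
    moreover from this have "card (A - F) < card A" unfolding m_def by linarith
    ultimately show ?thesis using less.hyps[of "A - F"] less.prems by (simp add: d_def)
  qed (simp add: d_def)
  have "fact m = (\<Sum>F\<in>Pow A. real (card (derangements (A - F))))"
    using sum_permutes_by_fixed_points[OF less.prems, of "\<lambda>_. 1"]
      card_permutations[OF m_def[symmetric] less.prems]
    by simp
  also have "\<dots> = (\<Sum>F\<in>Pow A. d (card F))"
    using smaller by (rule sum.cong[OF refl])
  also have "\<dots> = (\<Sum>j\<le>m. real (m choose j) * d j)"
    unfolding m_def by (rule sum_Pow_by_card[OF less.prems])
  also have "\<dots> = real (card (derangements A)) + (\<Sum>j\<in>{1..m}. real (m choose j) * d j)"
    by (simp add: atMost_atLeast0 sum.atLeast_Suc_atMost d_def)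
  also have "(\<Sum>j\<in>{1..m}. real (m choose j) * d j)
           = fact m * (\<Sum>j\<in>{1..m}. derangement_fraction (m - j) / fact j)"
    unfolding sum_distrib_left by (intro sum.cong refl) (auto simp: d_def binomial_fact field_simps)
  also have "(\<Sum>j\<in>{1..m}. derangement_fraction (m - j) / fact j) = 1 - derangement_fraction m"
    using derangement_fraction_convolution[of m] by (simp add: atMost_atLeast0 sum.atLeast_Suc_atMost)
  finally show ?case unfolding m_def by (simp add: algebra_simps)
qed

lemma derangement_fraction_nonneg: "0 \<le> derangement_fraction m"
  and derangement_fraction_le_1: "derangement_fraction m \<le> 1"
proof -
  have fin: "finite {1..m}" and card: "card {1..m} = m" by simp_all
  have "card (derangements {1..m}) \<le> card {\<sigma>. \<sigma> permutes {1..m}}"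
    by (rule card_mono) (simp_all add: derangements_def finite_permutations subset_iff)
  also have "\<dots> = fact m"
    by (rule card_permutations) simp_all
  finally have "real (card (derangements {1..m})) \<le> fact m"
    by (metis of_nat_fact of_nat_le_iff)
  hence "fact m * derangement_fraction m \<le> fact m * 1"
    using card_derangements[OF fin] unfolding card by simp
  moreover have "fact m * 0 \<le> fact m * derangement_fraction m"
    using card_derangements[OF fin] unfolding card by (metis mult_zero_right of_nat_0_le_iff)
  ultimately show "0 \<le> derangement_fraction m" "derangement_fraction m \<le> 1"
    using fact_gt_zero by (metis mult_le_cancel_left_pos)+
qed

lemma sum_permutes_card_fixed_points:
  fixes h :: "nat \<Rightarrow> real"
  assumes S: "finite S"
  shows "(\<Sum>\<pi>\<in>{\<pi>. \<pi> permutes S}. h (card (fixed_points S \<pi>)))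
       = fact (card S) * (\<Sum>j\<le>card S. h j * derangement_fraction (card S - j) / fact j)"
proof -
  define n where "n = card S"
  have "real (card (derangements (S - F))) = fact (n - card F) * derangement_fraction (n - card F)"
    if "F \<in> Pow S" for F
    using that card_derangements[of "S - F"] S by (simp add: n_def card_Diff_subset finite_subset)
  hence "(\<Sum>\<pi>\<in>{\<pi>. \<pi> permutes S}. h (card (fixed_points S \<pi>)))
      = (\<Sum>F\<in>Pow S. fact (n - card F) * derangement_fraction (n - card F) * h (card F))"
    unfolding sum_permutes_by_fixed_points[OF S, of "\<lambda>F. h (card F)"]
    by (intro sum.cong refl) simp
  also have "\<dots> = (\<Sum>j\<le>n. real (n choose j) * (fact (n - j) * derangement_fraction (n - j) * h j))"
    unfolding n_def by (rule sum_Pow_by_card[OF S])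
  also have "\<dots> = fact n * (\<Sum>j\<le>n. h j * derangement_fraction (n - j) / fact j)"
    unfolding sum_distrib_left by (intro sum.cong refl) (auto simp: binomial_fact field_simps)
  finally show ?thesis unfolding n_def .
qed

section \<open>The law of the number of fixed points\<close>

abbreviation perms :: "nat \<Rightarrow> (nat \<Rightarrow> nat) set" where
  "perms n \<equiv> {\<sigma>. \<sigma> permutes {1..n}}"

text \<open>\<open>scaled_partition n \<theta> = exp (logZ n \<theta>) / fact n\<close> by \<open>sum_perms_exp_fixpts\<close>.\<close>
definition scaled_partition :: "nat \<Rightarrow> real \<Rightarrow> real" where
  "scaled_partition n \<theta> = (\<Sum>j\<le>n. exp \<theta> ^ j / fact j * derangement_fraction (n - j))"

lemma exp_mult_of_nat: "exp (\<theta> * real j) = exp \<theta> ^ j"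
  by (simp add: exp_of_nat_mult[symmetric] mult.commute)

lemma sum_perms_fixpts:
  fixes h :: "nat \<Rightarrow> real"
  shows "(\<Sum>\<pi>\<in>perms n. h (fixpts n \<pi>))
       = fact n * (\<Sum>j\<le>n. h j * derangement_fraction (n - j) / fact j)"
  using sum_permutes_card_fixed_points[of "{1..n}" h] by (simp add: fixpts_def fixed_points_def)

lemma sum_perms_exp_fixpts:
  "(\<Sum>\<pi>\<in>perms n. exp \<theta> ^ fixpts n \<pi>) = fact n * scaled_partition n \<theta>"
  unfolding sum_perms_fixpts scaled_partition_def by (simp add: field_simps)

lemma scaled_partition_pos: "0 < scaled_partition n \<theta>"
proof -
  have "0 < (\<Sum>\<pi>\<in>perms n. exp \<theta> ^ fixpts n \<pi>)"
    by (rule sum_pos2[of _ id]) (auto simp: finite_permutations permutes_id)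
  thus ?thesis unfolding sum_perms_exp_fixpts by (simp add: zero_less_mult_iff)
qed

lemma pmf_R_pmf:
  "pmf (R_pmf n \<theta>) \<pi>
     = (if \<pi> permutes {1..n} then exp \<theta> ^ fixpts n \<pi> / (fact n * scaled_partition n \<theta>) else 0)"
proof -
  define Z where "Z = fact n * scaled_partition n \<theta>"
  have Z: "0 < Z" unfolding Z_def using scaled_partition_pos by simp
  have "logZ n \<theta> = ln Z"
    unfolding logZ_def Z_def sum_perms_exp_fixpts[symmetric] exp_mult_of_nat ..
  hence "exp (logZ n \<theta>) = Z" using Z by simp
  hence density: "(\<lambda>\<pi>. if \<pi> permutes {1..n} then exp (\<theta> * real (fixpts n \<pi>) - logZ n \<theta>) else 0)
      = (\<lambda>\<pi>. if \<pi> permutes {1..n} then exp \<theta> ^ fixpts n \<pi> / Z else 0)"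
    by (intro ext) (simp add: exp_diff exp_mult_of_nat)
  have "(\<integral>\<^sup>+\<pi>. ennreal (if \<pi> permutes {1..n} then exp \<theta> ^ fixpts n \<pi> / Z else 0) \<partial>count_space UNIV)
      = ennreal (\<Sum>\<pi>\<in>perms n. exp \<theta> ^ fixpts n \<pi> / Z)"
    by (subst nn_integral_count_space'[where A="perms n"])
       (use Z in \<open>auto simp: finite_permutations intro!: sum_ennreal\<close>)
  also have "\<dots> = 1"
    using scaled_partition_pos[of n \<theta>]
    unfolding sum_divide_distrib[symmetric] sum_perms_exp_fixpts Z_def by simp
  finally show ?thesis
    unfolding R_pmf_def density Z_def[symmetric] using Z by (subst pmf_embed_pmf) auto
qed

lemma set_pmf_R_pmf: "set_pmf (R_pmf n \<theta>) \<subseteq> perms n"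
  by (auto simp: set_pmf_eq pmf_R_pmf split: if_splits)

lemma prob_R_pmf:
  "measure_pmf.prob (R_pmf n \<theta>) A
     = (\<Sum>\<pi>\<in>perms n \<inter> A. exp \<theta> ^ fixpts n \<pi>) / (fact n * scaled_partition n \<theta>)"
proof -
  have "measure_pmf.prob (R_pmf n \<theta>) A = measure_pmf.prob (R_pmf n \<theta>) (perms n \<inter> A)"
    using set_pmf_R_pmf[of n \<theta>]
    by (metis (no_types, lifting) inf.absorb_iff2 inf_assoc inf_commute measure_Int_set_pmf)
  also have "\<dots> = (\<Sum>\<pi>\<in>perms n \<inter> A. pmf (R_pmf n \<theta>) \<pi>)"
    by (rule measure_measure_pmf_finite) (simp add: finite_permutations)
  finally show ?thesis by (simp add: pmf_R_pmf sum_divide_distrib)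
qed

lemma expectation_R_pmf_fixpts:
  fixes g :: "nat \<Rightarrow> real"
  shows "measure_pmf.expectation (R_pmf n \<theta>) (\<lambda>\<pi>. g (fixpts n \<pi>))
      = (\<Sum>j\<le>n. g j * exp \<theta> ^ j / fact j * derangement_fraction (n - j)) / scaled_partition n \<theta>"
proof -
  have "measure_pmf.expectation (R_pmf n \<theta>) (\<lambda>\<pi>. g (fixpts n \<pi>))
      = (\<Sum>\<pi>\<in>perms n. g (fixpts n \<pi>) * pmf (R_pmf n \<theta>) \<pi>)"
    using set_pmf_R_pmf[of n \<theta>] by (intro integral_measure_pmf_real) (auto simp: finite_permutations)
  also have "\<dots> = (\<Sum>\<pi>\<in>perms n. g (fixpts n \<pi>) * exp \<theta> ^ fixpts n \<pi>) / (fact n * scaled_partition n \<theta>)"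
    by (simp add: pmf_R_pmf sum_divide_distrib)
  also have "\<dots> = (\<Sum>j\<le>n. g j * exp \<theta> ^ j / fact j * derangement_fraction (n - j)) / scaled_partition n \<theta>"
    by (subst sum_perms_fixpts) (simp add: field_simps)
  finally show ?thesis .
qed

section \<open>The Poisson limit\<close>

lemma exp_sums: "(\<lambda>j. x ^ j / fact j) sums exp (x::real)"
  using exp_converges[of x] by (simp add: divide_inverse scaleR_conv_of_real mult.commute)

lemma convolution_derangement_fraction_LIMSEQ:
  fixes c :: "nat \<Rightarrow> real"
  assumes c: "summable (\<lambda>j. norm (c j))"
  shows "(\<lambda>n. \<Sum>j\<le>n. c j * derangement_fraction (n - j)) \<longlonglongrightarrow> suminf c * exp (-1)"
proof -
  define a where "a = (\<lambda>j n. if j \<le> n then c j * derangement_fraction (n - j) else 0)"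
  have lim: "(\<lambda>n. a j n) \<longlonglongrightarrow> c j * exp (-1)" for j
  proof -
    have "(\<lambda>n. c j * derangement_fraction (n - j)) \<longlonglongrightarrow> c j * exp (-1)"
      by (intro tendsto_mult tendsto_const
            filterlim_compose[OF derangement_fraction_LIMSEQ filterlim_minus_const_nat_at_top])
    moreover have "eventually (\<lambda>n. c j * derangement_fraction (n - j) = a j n) sequentially"
      using eventually_ge_at_top[of j] by eventually_elim (simp add: a_def)
    ultimately show ?thesis by (rule Lim_transform_eventually)
  qed
  have "norm (a j n) \<le> norm (c j)" for j n
    using derangement_fraction_nonneg[of "n - j"] derangement_fraction_le_1[of "n - j"]
    by (simp add: a_def abs_mult mult_left_le)
  hence "eventually (\<lambda>(j,n). norm (a j n) \<le> norm (c j)) (at_top \<times>\<^sub>F sequentially)"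
    by (intro always_eventually) simp
  from tannerys_theorem[OF lim this c]
  have "(\<lambda>n. suminf (\<lambda>j. a j n)) \<longlonglongrightarrow> (\<Sum>j. c j * exp (-1))" by simp
  moreover have "suminf (\<lambda>j. a j n) = (\<Sum>j\<le>n. c j * derangement_fraction (n - j))" for n
    by (subst suminf_finite[of "{..n}"]) (simp_all add: a_def)
  moreover have "(\<Sum>j. c j * exp (-1)) = suminf c * exp (-1)"
    using summable_norm_cancel[OF c] by (rule suminf_mult2[symmetric])
  ultimately show ?thesis by simp
qed

lemma scaled_partition_LIMSEQ:
  "(\<lambda>n. scaled_partition n \<theta>) \<longlonglongrightarrow> exp (exp \<theta>) * exp (-1)"
proof -
  have "summable (\<lambda>j. norm (exp \<theta> ^ j / fact j))"
    using exp_sums[of "exp \<theta>"] by (simp add: sums_iff)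
  from convolution_derangement_fraction_LIMSEQ[OF this] show ?thesis
    unfolding scaled_partition_def using exp_sums[of "exp \<theta>"] by (simp add: sums_iff)
qed

lemma expectation_poisson_pmf:
  fixes g :: "nat \<Rightarrow> real"
  assumes x: "0 < x" and g: "summable (\<lambda>j. norm (g j * x ^ j / fact j))"
  shows "measure_pmf.expectation (poisson_pmf x) g = (\<Sum>j. g j * x ^ j / fact j) * exp (- x)"
proof -
  have "summable (\<lambda>j. norm (g j * x ^ j / fact j) * exp (- x))"
    using g by (rule summable_mult2)
  hence "integrable (count_space UNIV) (\<lambda>j. pmf (poisson_pmf x) j *\<^sub>R g j)"
    unfolding integrable_count_space_nat_iff using x by (simp add: abs_mult field_simps)
  hence "measure_pmf.expectation (poisson_pmf x) g = (\<Sum>j. pmf (poisson_pmf x) j *\<^sub>R g j)"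
    unfolding measure_pmf_eq_density
    by (subst integral_density) (auto simp: integral_count_space_nat)
  also have "\<dots> = (\<Sum>j. g j * x ^ j / fact j * exp (- x))"
    using x by (simp add: field_simps)
  also have "\<dots> = (\<Sum>j. g j * x ^ j / fact j) * exp (- x)"
    using summable_norm_cancel[OF g] by (rule suminf_mult2[symmetric])
  finally show ?thesis .
qed

lemma expectation_R_pmf_fixpts_LIMSEQ:
  fixes g :: "nat \<Rightarrow> real"
  assumes g: "summable (\<lambda>j. norm (g j * exp \<theta> ^ j / fact j))"
  shows "(\<lambda>n. measure_pmf.expectation (R_pmf n \<theta>) (\<lambda>\<pi>. g (fixpts n \<pi>)))
           \<longlonglongrightarrow> measure_pmf.expectation (poisson_pmf (exp \<theta>)) g"
proof -
  have "measure_pmf.expectation (poisson_pmf (exp \<theta>)) g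
      = ((\<Sum>j. g j * exp \<theta> ^ j / fact j) * exp (-1)) / (exp (exp \<theta>) * exp (-1))"
    by (simp add: expectation_poisson_pmf[OF exp_gt_zero g] exp_minus field_simps)
  thus ?thesis
    unfolding expectation_R_pmf_fixpts
    by (simp only:) (intro tendsto_divide convolution_derangement_fraction_LIMSEQ g
                       scaled_partition_LIMSEQ, simp)
qed

lemma summable_moment_exp_series:
  fixes x :: real
  assumes "0 \<le> x"
  shows "summable (\<lambda>j. norm (real j ^ k * x ^ j / fact j))"
proof (rule summable_comparison_test'[where N=0])
  show "summable (\<lambda>j. fact k * ((exp 1 * x) ^ j / fact j))"
    using exp_sums[of "exp 1 * x"] by (intro summable_mult) (simp add: sums_iff)
next
  fix j :: nat
  have "real j ^ k / fact k \<le> (\<Sum>i. real j ^ i / fact i)"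
    using exp_sums[of "real j"] by (intro sum_le_suminf[of _ "{k}", simplified]) (auto simp: sums_iff)
  hence "real j ^ k \<le> fact k * exp 1 ^ j"
    using exp_sums[of "real j"] by (simp add: sums_iff field_simps exp_mult_of_nat[of 1, simplified])
  hence "real j ^ k * x ^ j / fact j \<le> fact k * exp 1 ^ j * x ^ j / fact j"
    using assms by (intro divide_right_mono mult_right_mono) auto
  thus "norm (norm (real j ^ k * x ^ j / fact j)) \<le> fact k * ((exp 1 * x) ^ j / fact j)"
    using assms by (simp add: power_mult_distrib)
qed

lemma moments_fixpts_LIMSEQ:
  "(\<lambda>n. measure_pmf.expectation (R_pmf n \<theta>) (\<lambda>\<pi>. real (fixpts n \<pi>) ^ k))
      \<longlonglongrightarrow> measure_pmf.expectation (poisson_pmf (exp \<theta>)) (\<lambda>m. real m ^ k)"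
  using summable_moment_exp_series[of "exp \<theta>" k]
  by (intro expectation_R_pmf_fixpts_LIMSEQ) simp

lemma cdf_distr_measure_pmf:
  fixes f :: "'a \<Rightarrow> real"
  shows "cdf (distr (measure_pmf p) borel f) x = measure_pmf.expectation p (\<lambda>\<omega>. indicator {..x} (f \<omega>))"
proof -
  have "cdf (distr (measure_pmf p) borel f) x = measure_pmf.prob p (f -` {..x})"
    unfolding cdf_def2 by (subst measure_distr) auto
  also have "\<dots> = measure_pmf.expectation p (indicator (f -` {..x}))"
    using Bochner_Integration.integral_indicator[of "measure_pmf p" "f -` {..x}"] by simp
  also have "indicator (f -` {..x}) = (\<lambda>\<omega>. indicator {..x} (f \<omega>) :: real)"
    by (simp add: fun_eq_iff indicator_def)
  finally show ?thesis .
qed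

lemma weak_conv_fixpts_poisson:
  "weak_conv_m (\<lambda>n. distr (measure_pmf (R_pmf n \<theta>)) borel (\<lambda>\<pi>. real (fixpts n \<pi>)))
               (distr (measure_pmf (poisson_pmf (exp \<theta>))) borel real)"
  unfolding weak_conv_m_def weak_conv_def cdf_distr_measure_pmf
proof (intro allI impI expectation_R_pmf_fixpts_LIMSEQ)
  fix x :: real
  show "summable (\<lambda>j. norm (indicator {..x} (real j) * exp \<theta> ^ j / fact j))"
    by (rule summable_comparison_test'[where N=0, OF exp_sums[THEN sums_summable, of "exp \<theta>"]])
       (simp add: indicator_def)
qed

section \<open>Composing with the transposition of 1 and 2\<close>

lemma fixpts_comp_transpose:
  assumes "2 \<le> n" "\<pi> 1 = 2" "\<pi> 2 = 1"
  shows "fixpts n (\<pi> \<circ> Transposition.transpose 1 2) = fixpts n \<pi> + 2"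
proof -
  define X where "X = {i\<in>{1..n} - {1, 2}. \<pi> i = i}"
  have "{i\<in>{1..n}. \<pi> i = i} = X"
    using assms by (auto simp: X_def)
  moreover have "{i\<in>{1..n}. (\<pi> \<circ> Transposition.transpose 1 2) i = i} = insert 1 (insert 2 X)"
    using assms by (auto simp: X_def Transposition.transpose_def)
  moreover have "card (insert 1 (insert 2 X)) = card X + 2"
    by (simp add: X_def)
  ultimately show ?thesis
    unfolding fixpts_def by simp
qed

lemma prob_R_pmf_fix_12_eq:
  assumes n: "2 \<le> n"
  shows "measure_pmf.prob (R_pmf n \<theta>) {\<pi>. \<pi> 1 = 1 \<and> \<pi> 2 = 2}
       = exp (2 * \<theta>) * measure_pmf.prob (R_pmf n \<theta>) {\<pi>. \<pi> 1 = 2 \<and> \<pi> 2 = 1}"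
proof -
  define \<tau> :: "nat \<Rightarrow> nat" where "\<tau> = Transposition.transpose 1 2"
  define swapped where "swapped = perms n \<inter> {\<pi>. \<pi> 1 = 2 \<and> \<pi> 2 = 1}"
  have \<tau>: "\<tau> permutes {1..n}" "\<tau> \<circ> \<tau> = id"
    using n by (auto simp: \<tau>_def permutes_swap_id)
  have "perms n \<inter> {\<pi>. \<pi> 1 = 1 \<and> \<pi> 2 = 2} = (\<lambda>\<sigma>. \<sigma> \<circ> \<tau>) ` swapped"
  proof (intro equalityI subsetI)
    fix \<pi> assume "\<pi> \<in> perms n \<inter> {\<pi>. \<pi> 1 = 1 \<and> \<pi> 2 = 2}"
    hence "\<pi> \<circ> \<tau> \<in> swapped" and "\<pi> = \<pi> \<circ> \<tau> \<circ> \<tau>"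
      using \<tau> by (auto simp: swapped_def \<tau>_def permutes_compose o_assoc)
    thus "\<pi> \<in> (\<lambda>\<sigma>. \<sigma> \<circ> \<tau>) ` swapped" by blast
  qed (use \<tau> in \<open>auto simp: swapped_def \<tau>_def permutes_compose\<close>)
  moreover have "inj_on (\<lambda>\<sigma>. \<sigma> \<circ> \<tau>) swapped"
    using \<tau> by (intro inj_onI) (metis comp_assoc comp_id)
  ultimately have "(\<Sum>\<pi>\<in>perms n \<inter> {\<pi>. \<pi> 1 = 1 \<and> \<pi> 2 = 2}. exp \<theta> ^ fixpts n \<pi>)
      = (\<Sum>\<sigma>\<in>swapped. exp \<theta> ^ fixpts n (\<sigma> \<circ> \<tau>))"
    by (simp add: sum.reindex)
  also have "\<dots> = exp (2 * \<theta>) * (\<Sum>\<sigma>\<in>swapped. exp \<theta> ^ fixpts n \<sigma>)"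
    unfolding sum_distrib_left
  proof (intro sum.cong refl)
    fix \<sigma> assume "\<sigma> \<in> swapped"
    hence "fixpts n (\<sigma> \<circ> \<tau>) = fixpts n \<sigma> + 2"
      unfolding swapped_def \<tau>_def by (intro fixpts_comp_transpose[OF n]) auto
    thus "exp \<theta> ^ fixpts n (\<sigma> \<circ> \<tau>) = exp (2 * \<theta>) * exp \<theta> ^ fixpts n \<sigma>"
      by (simp add: power_add mult.commute flip: exp_add)
  qed
  finally show ?thesis
    unfolding prob_R_pmf swapped_def by simp
qed

lemma prob_R_pmf_swap_12_pos:
  assumes "2 \<le> n"
  shows "0 < measure_pmf.prob (R_pmf n \<theta>) {\<pi>. \<pi> 1 = 2 \<and> \<pi> 2 = 1}"
proof -
  have "Transposition.transpose 1 2 \<in> perms n \<inter> {\<pi>. \<pi> 1 = 2 \<and> \<pi> 2 = 1}"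
    using assms by (auto simp: permutes_swap_id)
  hence "0 < (\<Sum>\<pi>\<in>perms n \<inter> {\<pi>. \<pi> 1 = 2 \<and> \<pi> 2 = 1}. exp \<theta> ^ fixpts n \<pi>)"
    by (intro sum_pos2) (auto simp: finite_permutations)
  thus ?thesis
    unfolding prob_R_pmf using scaled_partition_pos[of n \<theta>] by simp
qed

section \<open>Sums over all permutations\<close>

lemma sum_permutes_apply:
  fixes h :: "'a \<Rightarrow> real"
  assumes S: "finite S" and a: "a \<in> S"
  shows "(\<Sum>\<pi>\<in>{\<pi>. \<pi> permutes S}. h (\<pi> a)) = fact (card S - 1) * (\<Sum>k\<in>S. h k)"
proof -
  define S' where "S' = S - {a}"
  have SS: "S = insert a S'" and aS': "a \<notin> S'" and fS': "finite S'" using a S by (auto simp: S'_def)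
  have "(\<Sum>\<pi>\<in>{\<pi>. \<pi> permutes S}. h (\<pi> a))
      = (\<Sum>b\<in>S. \<Sum>q\<in>{p. p permutes S'}. h ((Transposition.transpose a b \<circ> q) a))"
    unfolding SS by (rule sum_over_permutations_insert[OF fS' aS'])
  also have "\<dots> = (\<Sum>b\<in>S. \<Sum>q\<in>{p. p permutes S'}. h b)"
    using aS' by (intro sum.cong refl) (simp add: permutes_not_in)
  also have "\<dots> = (\<Sum>b\<in>S. fact (card S - 1) * h b)"
    using card_permutations[OF refl fS'] a S by (simp add: S'_def)
  finally show ?thesis by (simp add: sum_distrib_left)
qed

lemma sum_permutes_apply2:
  fixes g :: "'a \<Rightarrow> 'a \<Rightarrow> real"
  assumes S: "finite S" and a: "a \<in> S" and a': "a' \<in> S" and "a \<noteq> a'"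
  shows "(\<Sum>\<pi>\<in>{\<pi>. \<pi> permutes S}. g (\<pi> a) (\<pi> a'))
       = fact (card S - 2) * (\<Sum>j\<in>S. \<Sum>k\<in>S - {j}. g j k)"
proof -
  define S' where "S' = S - {a}"
  have SS: "S = insert a S'" and aS': "a \<notin> S'" and fS': "finite S'" using a S by (auto simp: S'_def)
  have a'S': "a' \<in> S'" using a' \<open>a \<noteq> a'\<close> by (auto simp: S'_def)
  have card_S': "card S' - 1 = card S - 2" using a S by (simp add: S'_def)
  have "(\<Sum>\<pi>\<in>{\<pi>. \<pi> permutes S}. g (\<pi> a) (\<pi> a'))
      = (\<Sum>b\<in>S. \<Sum>q\<in>{p. p permutes S'}.
           g ((Transposition.transpose a b \<circ> q) a) ((Transposition.transpose a b \<circ> q) a'))"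
    unfolding SS by (rule sum_over_permutations_insert[OF fS' aS'])
  also have "\<dots> = (\<Sum>b\<in>S. \<Sum>q\<in>{p. p permutes S'}. g b (Transposition.transpose a b (q a')))"
    using aS' by (intro sum.cong refl) (simp add: permutes_not_in)
  also have "\<dots> = (\<Sum>b\<in>S. fact (card S - 2) * (\<Sum>k\<in>S'. g b (Transposition.transpose a b k)))"
  proof (intro sum.cong refl)
    fix b
    show "(\<Sum>q\<in>{p. p permutes S'}. g b (Transposition.transpose a b (q a')))
        = fact (card S - 2) * (\<Sum>k\<in>S'. g b (Transposition.transpose a b k))"
      using sum_permutes_apply[OF fS' a'S', of "\<lambda>k. g b (Transposition.transpose a b k)"]
      unfolding card_S' .
  qed
  also have "\<dots> = (\<Sum>b\<in>S. fact (card S - 2) * (\<Sum>k\<in>S - {b}. g b k))"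
  proof (rule sum.cong[OF refl])
    fix b assume "b \<in> S"
    hence "(\<Sum>k\<in>S'. g b (Transposition.transpose a b k)) = (\<Sum>k\<in>S - {b}. g b k)"
      using a by (intro sum.reindex_bij_witness[where i="Transposition.transpose a b"
                                                   and j="Transposition.transpose a b"])
                 (auto simp: S'_def Transposition.transpose_def split: if_splits)
    thus "fact (card S - 2) * (\<Sum>k\<in>S'. g b (Transposition.transpose a b k))
        = fact (card S - 2) * (\<Sum>k\<in>S - {b}. g b k)" by simp
  qed
  finally show ?thesis by (simp add: sum_distrib_left)
qed

lemma fact_eq_mult_fact_minus_2:
  assumes "2 \<le> n"
  shows "(fact n :: real) = real n * (real n - 1) * fact (n - 2)"
proof -
  obtain m where "n = Suc (Suc m)" using assms by (metis add_2_eq_Suc le_Suc_ex)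
  thus ?thesis by (simp add: algebra_simps)
qed

lemma sum_permutes_apply_sq_le:
  fixes g :: "'a \<Rightarrow> 'a \<Rightarrow> real"
  assumes S: "finite S" and i: "i \<in> S" and bound: "\<And>j. j \<in> S \<Longrightarrow> \<bar>g i j\<bar> \<le> M"
  shows "(\<Sum>\<pi>\<in>{\<pi>. \<pi> permutes S}. (g i (\<pi> i))\<^sup>2) \<le> fact (card S) * M\<^sup>2"
proof -
  have "(\<Sum>\<pi>\<in>{\<pi>. \<pi> permutes S}. (g i (\<pi> i))\<^sup>2) = fact (card S - 1) * (\<Sum>j\<in>S. (g i j)\<^sup>2)"
    by (rule sum_permutes_apply[OF S i])
  also have "\<dots> \<le> fact (card S - 1) * (\<Sum>j\<in>S. M\<^sup>2)"
  proof (intro mult_left_mono sum_mono)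
    fix j assume "j \<in> S"
    thus "(g i j)\<^sup>2 \<le> M\<^sup>2"
      using bound abs_le_square_iff[of "g i j" M] by fastforce
  qed simp
  also have "\<dots> = fact (card S) * M\<^sup>2"
    using S i by (cases "card S") (auto simp: card_gt_0_iff)
  finally show ?thesis .
qed

text \<open>Centring row \<open>i'\<close> kills the product term of the double sum over \<open>k \<noteq> j\<close>.\<close>
lemma sum_permutes_apply2_centred:
  fixes g :: "'a \<Rightarrow> 'a \<Rightarrow> real"
  assumes S: "finite S" and i: "i \<in> S" "i' \<in> S" "i \<noteq> i'" and centred: "(\<Sum>k\<in>S. g i' k) = 0"
  shows "(\<Sum>\<pi>\<in>{\<pi>. \<pi> permutes S}. g i (\<pi> i) * g i' (\<pi> i'))
       = - fact (card S - 2) * (\<Sum>j\<in>S. g i j * g i' j)"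
proof -
  have "(\<Sum>k\<in>S - {j}. g i j * g i' k) = - (g i j * g i' j)" if "j \<in> S" for j
  proof -
    have "(\<Sum>k\<in>S - {j}. g i' k) = - g i' j"
      using centred sum.remove[OF S that, of "g i'"] by linarith
    thus ?thesis by (simp add: sum_distrib_left[symmetric])
  qed
  thus ?thesis
    using sum_permutes_apply2[OF S i, of "\<lambda>j k. g i j * g i' k"]
    by (simp add: sum_negf)
qed

lemma sum_permutes_offdiagonal_centred_le:
  fixes g :: "'a \<Rightarrow> 'a \<Rightarrow> real" and M :: real
  assumes S: "finite S" and i: "i \<in> S"
    and centred: "\<And>i. i \<in> S \<Longrightarrow> (\<Sum>j\<in>S. g i j) = 0"
    and bound: "\<And>i j. i \<in> S \<Longrightarrow> j \<in> S \<Longrightarrow> \<bar>g i j\<bar> \<le> M"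
  shows "(\<Sum>i'\<in>S - {i}. \<Sum>\<pi>\<in>{\<pi>. \<pi> permutes S}. g i (\<pi> i) * g i' (\<pi> i')) \<le> fact (card S) * M\<^sup>2"
proof (cases "2 \<le> card S")
  case True
  have M: "0 \<le> M" using bound[OF i i] by linarith
  have "(\<Sum>\<pi>\<in>{\<pi>. \<pi> permutes S}. g i (\<pi> i) * g i' (\<pi> i')) \<le> fact (card S - 2) * (card S * M\<^sup>2)"
    if i': "i' \<in> S - {i}" for i'
  proof -
    have "\<bar>\<Sum>j\<in>S. g i j * g i' j\<bar> \<le> (\<Sum>j\<in>S. M\<^sup>2)"
      using i i' bound M
      by (intro order.trans[OF sum_abs sum_mono])
         (auto simp: abs_mult power2_eq_square intro!: mult_mono)
    hence "fact (card S - 2) * - (\<Sum>j\<in>S. g i j * g i' j) \<le> fact (card S - 2) * (card S * M\<^sup>2)"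
      by (intro mult_left_mono) (auto dest: abs_le_D2)
    moreover have "i' \<in> S" "i \<noteq> i'" using i' by auto
    ultimately show ?thesis
      using sum_permutes_apply2_centred[of S i i' g, OF S i \<open>i' \<in> S\<close> \<open>i \<noteq> i'\<close> centred[OF \<open>i' \<in> S\<close>]] by simp
  qed
  hence "(\<Sum>i'\<in>S - {i}. \<Sum>\<pi>\<in>{\<pi>. \<pi> permutes S}. g i (\<pi> i) * g i' (\<pi> i'))
      \<le> (\<Sum>i'\<in>S - {i}. fact (card S - 2) * (card S * M\<^sup>2))"
    by (rule sum_mono)
  also have "\<dots> = fact (card S) * M\<^sup>2"
    using S i True by (simp add: fact_eq_mult_fact_minus_2 of_nat_diff)
  finally show ?thesis .
next
  case False
  hence "card (S - {i}) = 0"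
    using S i by (simp add: card_Diff_singleton)
  hence "S - {i} = {}"
    using S by simp
  thus ?thesis by (simp only:) simp
qed

lemma sum_permutes_sq_sum_centred_le:
  fixes g :: "'a \<Rightarrow> 'a \<Rightarrow> real" and M :: real
  assumes S: "finite S"
    and centred: "\<And>i. i \<in> S \<Longrightarrow> (\<Sum>j\<in>S. g i j) = 0"
    and bound: "\<And>i j. i \<in> S \<Longrightarrow> j \<in> S \<Longrightarrow> \<bar>g i j\<bar> \<le> M"
  shows "(\<Sum>\<pi>\<in>{\<pi>. \<pi> permutes S}. (\<Sum>i\<in>S. g i (\<pi> i))\<^sup>2) \<le> 2 * card S * fact (card S) * M\<^sup>2"
proof -
  define P where "P = {\<pi>. \<pi> permutes S}"
  have row: "(\<Sum>i'\<in>S. \<Sum>\<pi>\<in>P. g i (\<pi> i) * g i' (\<pi> i')) \<le> 2 * fact (card S) * M\<^sup>2"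
    if i: "i \<in> S" for i
  proof -
    have "(\<Sum>\<pi>\<in>P. g i (\<pi> i) * g i (\<pi> i)) \<le> fact (card S) * M\<^sup>2"
      using sum_permutes_apply_sq_le[OF S i, of g M] bound i
      by (simp add: P_def power2_eq_square)
    with sum_permutes_offdiagonal_centred_le[of S i g M, OF S i centred bound] show ?thesis
      using S i by (simp add: P_def sum.remove[of S i])
  qed
  have "(\<Sum>\<pi>\<in>P. (\<Sum>i\<in>S. g i (\<pi> i))\<^sup>2) = (\<Sum>\<pi>\<in>P. \<Sum>i\<in>S. \<Sum>i'\<in>S. g i (\<pi> i) * g i' (\<pi> i'))"
    by (simp add: power2_eq_square sum_product)
  also have "\<dots> = (\<Sum>i\<in>S. \<Sum>\<pi>\<in>P. \<Sum>i'\<in>S. g i (\<pi> i) * g i' (\<pi> i'))"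
    by (rule sum.swap)
  also have "\<dots> = (\<Sum>i\<in>S. \<Sum>i'\<in>S. \<Sum>\<pi>\<in>P. g i (\<pi> i) * g i' (\<pi> i'))"
    by (rule sum.cong[OF refl], rule sum.swap)
  also have "\<dots> \<le> (\<Sum>i\<in>S. 2 * fact (card S) * M\<^sup>2)"
    by (intro sum_mono row)
  also have "\<dots> = 2 * card S * fact (card S) * M\<^sup>2"
    by simp
  finally show ?thesis unfolding P_def .
qed

lemma sum_permutes_sq_deviation_le:
  fixes g :: "'a \<Rightarrow> 'a \<Rightarrow> real" and M :: real
  assumes S: "finite S" and bound: "\<And>i j. i \<in> S \<Longrightarrow> j \<in> S \<Longrightarrow> \<bar>g i j\<bar> \<le> M"
  shows "(\<Sum>\<pi>\<in>{\<pi>. \<pi> permutes S}.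
           ((\<Sum>i\<in>S. g i (\<pi> i)) - (\<Sum>i\<in>S. \<Sum>j\<in>S. g i j) / card S)\<^sup>2)
       \<le> 8 * card S * fact (card S) * M\<^sup>2"
proof -
  define c where "c = (\<lambda>i j. g i j - (\<Sum>k\<in>S. g i k) / card S)"
  have "(\<Sum>i\<in>S. c i (\<pi> i)) = (\<Sum>i\<in>S. g i (\<pi> i)) - (\<Sum>i\<in>S. \<Sum>j\<in>S. g i j) / card S" for \<pi>
    unfolding c_def by (simp add: sum_subtractf sum_divide_distrib)
  moreover have "(\<Sum>j\<in>S. c i j) = 0" if "i \<in> S" for i
    using that S by (auto simp: c_def sum_subtractf)
  moreover have "\<bar>c i j\<bar> \<le> 2 * M" if "i \<in> S" "j \<in> S" for i j
  proof -
    have "\<bar>\<Sum>k\<in>S. g i k\<bar> \<le> (\<Sum>k\<in>S. \<bar>g i k\<bar>)"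
      by (rule sum_abs)
    also have "\<dots> \<le> (\<Sum>k\<in>S. M)"
      using bound that by (intro sum_mono) auto
    finally have "\<bar>(\<Sum>k\<in>S. g i k) / card S\<bar> \<le> M"
      using that S by (auto simp: abs_div_pos divide_le_eq card_gt_0_iff mult.commute)
    thus ?thesis using bound[OF that] unfolding c_def by linarith
  qed
  ultimately show ?thesis
    using sum_permutes_sq_sum_centred_le[OF S, of c "2 * M"] by (simp add: power_mult_distrib)
qed

section \<open>Riemann sums\<close>

lemma integral_minus_endpoint_le:
  fixes g :: "real \<Rightarrow> real"
  assumes ab: "a \<le> b" and g: "g integrable_on {a..b}"
    and close: "\<And>x. x \<in> {a..b} \<Longrightarrow> \<bar>g x - g b\<bar> \<le> \<eta>"
  shows "\<bar>integral {a..b} g - (b - a) * g b\<bar> \<le> (b - a) * \<eta>"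
proof -
  have \<eta>: "0 \<le> \<eta>" using close[of b] ab by auto
  have hi: "((\<lambda>x. g x - g b) has_integral (integral {a..b} g - (b - a) * g b)) (cbox a b)"
    using has_integral_diff[OF integrable_integral[OF g] has_integral_const_real[of "g b" a b]] ab
    by simp
  have "\<And>x. x \<in> cbox a b \<Longrightarrow> norm (g x - g b) \<le> \<eta>"
    using close by simp
  from has_integral_bound[OF \<eta> hi this] show ?thesis
    using ab by (simp add: mult.commute)
qed

lemma riemann_sum_error_le:
  fixes g :: "real \<Rightarrow> real"
  assumes g: "continuous_on {0..1} g" and n: "0 < n"
    and modulus: "\<And>x y. x \<in> {0..1} \<Longrightarrow> y \<in> {0..1} \<Longrightarrow> \<bar>x - y\<bar> \<le> 1 / real n \<Longrightarrow> \<bar>g x - g y\<bar> \<le> \<eta>"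
  shows "\<bar>integral {0..1} g - (\<Sum>i=1..n. g (real i / real n)) / real n\<bar> \<le> \<eta>"
proof -
  define x where "x = (\<lambda>i::nat. real i / real n)"
  have integrable: "g integrable_on {a..b}" if "0 \<le> a" "b \<le> 1" for a b
    by (rule integrable_continuous_interval, rule continuous_on_subset[OF g]) (use that in auto)
  have split: "integral {0..x k} g = (\<Sum>i=1..k. integral {x (i - 1)..x i} g)" if "k \<le> n" for k
    using that
  proof (induction k)
    case (Suc k)
    have "integral {0..x k} g + integral {x k..x (Suc k)} g = integral {0..x (Suc k)} g"
      using Suc.prems n
      by (intro Henstock_Kurzweil_Integration.integral_combine integrable) (auto simp: x_def divide_right_mono)
    thus ?case using Suc by simp
  qed (simp add: x_def)
  have piece: "\<bar>integral {x (i - 1)..x i} g - g (x i) / real n\<bar> \<le> \<eta> / real n"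
    if i: "i \<in> {1..n}" for i
  proof -
    have step: "x i - x (i - 1) = 1 / real n" "0 \<le> x (i - 1)" "x i \<le> 1" "x (i - 1) \<le> x i"
      using i n by (auto simp: x_def of_nat_diff field_simps)
    have "\<bar>integral {x (i - 1)..x i} g - (x i - x (i - 1)) * g (x i)\<bar> \<le> (x i - x (i - 1)) * \<eta>"
      using step by (intro integral_minus_endpoint_le integrable modulus) auto
    thus ?thesis unfolding step(1) by simp
  qed
  have "integral {0..1} g - (\<Sum>i=1..n. g (x i)) / real n
      = (\<Sum>i=1..n. integral {x (i - 1)..x i} g - g (x i) / real n)"
    using split[of n] n by (simp add: x_def sum_subtractf sum_divide_distrib)
  also have "\<bar>\<dots>\<bar> \<le> (\<Sum>i=1..n. \<eta> / real n)"
    by (intro order.trans[OF sum_abs sum_mono] piece)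
  also have "\<dots> = \<eta>" using n by simp
  finally show ?thesis unfolding x_def .
qed

definition perm_riemann_sum :: "(real \<times> real \<Rightarrow> real) \<Rightarrow> nat \<Rightarrow> (nat \<Rightarrow> nat) \<Rightarrow> real" where
  "perm_riemann_sum f n \<pi> = (1 / real n) * (\<Sum>i=1..n. f (real i / real n, real (\<pi> i) / real n))"

definition grid_riemann_sum :: "(real \<times> real \<Rightarrow> real) \<Rightarrow> nat \<Rightarrow> real" where
  "grid_riemann_sum f n = (\<Sum>i=1..n. \<Sum>j=1..n. f (real i / real n, real j / real n)) / (real n)\<^sup>2"

lemma uniformly_continuous_on_modulus_real:
  fixes g :: "'a::metric_space \<Rightarrow> real"
  assumes "uniformly_continuous_on S g" "0 < \<eta>"
  obtains N :: nat where "0 < N"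
    "\<And>n x y. N \<le> n \<Longrightarrow> x \<in> S \<Longrightarrow> y \<in> S \<Longrightarrow> dist x y \<le> 1 / real n \<Longrightarrow> \<bar>g x - g y\<bar> \<le> \<eta>"
proof -
  obtain \<delta> where \<delta>: "0 < \<delta>" "\<And>x y. x \<in> S \<Longrightarrow> y \<in> S \<Longrightarrow> dist y x < \<delta> \<Longrightarrow> dist (g y) (g x) < \<eta>"
    using assms unfolding uniformly_continuous_on_def by metis
  obtain N :: nat where N: "0 < N" "inverse (real N) < \<delta>"
    using ex_inverse_of_nat_less[OF \<delta>(1)] by auto
  show ?thesis
  proof (rule that[OF N(1)])
    fix n x y assume "N \<le> n" "x \<in> S" "y \<in> S" "dist x y \<le> 1 / real n"
    moreover have "1 / real n \<le> inverse (real N)"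
      using \<open>N \<le> n\<close> N(1) by (simp add: divide_simps)
    ultimately have "dist (g x) (g y) < \<eta>"
      using \<delta>(2)[of y x] N(2) by (simp add: dist_commute)
    thus "\<bar>g x - g y\<bar> \<le> \<eta>" by (simp add: dist_real_def)
  qed
qed

lemma iterated_riemann_sum_error_le:
  fixes g :: "real \<Rightarrow> real \<Rightarrow> real"
  assumes n: "0 < n"
    and slices: "\<And>x. x \<in> {0..1} \<Longrightarrow> continuous_on {0..1} (g x)"
    and slices_modulus: "\<And>x y y'. x \<in> {0..1} \<Longrightarrow> y \<in> {0..1} \<Longrightarrow> y' \<in> {0..1} \<Longrightarrow>
                           \<bar>y - y'\<bar> \<le> 1 / real n \<Longrightarrow> \<bar>g x y - g x y'\<bar> \<le> \<eta>"
    and H: "continuous_on {0..1} (\<lambda>x. integral {0..1} (g x))"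
    and H_modulus: "\<And>x x'. x \<in> {0..1} \<Longrightarrow> x' \<in> {0..1} \<Longrightarrow> \<bar>x - x'\<bar> \<le> 1 / real n \<Longrightarrow>
                      \<bar>integral {0..1} (g x) - integral {0..1} (g x')\<bar> \<le> \<eta>"
  shows "\<bar>(\<Sum>i=1..n. \<Sum>j=1..n. g (real i / real n) (real j / real n)) / (real n)\<^sup>2
           - integral {0..1} (\<lambda>x. integral {0..1} (g x))\<bar> \<le> 2 * \<eta>"
proof -
  define x where "x = (\<lambda>i::nat. real i / real n)"
  define rows where "rows = (\<Sum>i=1..n. (\<Sum>j=1..n. g (x i) (x j)) / real n - integral {0..1} (g (x i)))"
  have "\<bar>integral {0..1} (g (x i)) - (\<Sum>j=1..n. g (x i) (x j)) / real n\<bar> \<le> \<eta>" if "i \<in> {1..n}" for i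
    using that unfolding x_def by (intro riemann_sum_error_le n slices slices_modulus) auto
  hence "\<bar>rows\<bar> \<le> (\<Sum>i=1..n. \<eta>)"
    unfolding rows_def by (intro order.trans[OF sum_abs sum_mono]) (simp add: abs_minus_commute)
  hence rows: "\<bar>rows / real n\<bar> \<le> \<eta>"
    using n by (simp add: divide_le_eq mult.commute)
  have cols: "\<bar>integral {0..1} (\<lambda>x. integral {0..1} (g x)) - (\<Sum>i=1..n. integral {0..1} (g (x i))) / real n\<bar> \<le> \<eta>"
    unfolding x_def by (rule riemann_sum_error_le[OF H n H_modulus])
  have "(\<Sum>i=1..n. \<Sum>j=1..n. g (x i) (x j)) / (real n)\<^sup>2 - integral {0..1} (\<lambda>x. integral {0..1} (g x))
      = rows / real n + ((\<Sum>i=1..n. integral {0..1} (g (x i))) / real n - integral {0..1} (\<lambda>x. integral {0..1} (g x)))"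
    unfolding rows_def by (simp add: sum_subtractf diff_divide_distrib sum_divide_distrib power2_eq_square)
  thus ?thesis
    using rows cols unfolding x_def by linarith
qed

lemma grid_riemann_sum_LIMSEQ:
  fixes f :: "real \<times> real \<Rightarrow> real"
  assumes f: "continuous_on (cbox (0,0) (1,1)) f"
  shows "grid_riemann_sum f \<longlonglongrightarrow> integral (cbox (0,0) (1,1)) f"
proof (rule LIMSEQ_I)
  fix r :: real assume r: "0 < r"
  define H where "H = (\<lambda>x. integral {0..1} (\<lambda>y. f (x, y)))"
  have Q: "cbox (0,0) (1,1) = {0..1::real} \<times> {0..1::real}"
    by (simp add: cbox_Pair_eq)
  have "continuous_on {0..1} (\<lambda>x. integral (cbox 0 1) (\<lambda>y. f (x, y)))"
    by (rule integral_continuous_on_param) (use f in \<open>simp add: Q\<close>)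
  hence H: "continuous_on {0..1} H"
    by (simp add: H_def)
  obtain N1 where N1: "0 < N1"
    "\<And>n x y. N1 \<le> n \<Longrightarrow> x \<in> {0..1} \<Longrightarrow> y \<in> {0..1} \<Longrightarrow> dist x y \<le> 1 / real n \<Longrightarrow> \<bar>H x - H y\<bar> \<le> r / 3"
    by (rule uniformly_continuous_on_modulus_real[OF compact_uniformly_continuous[OF H compact_Icc],
          of "r / 3"]) (use r in auto)
  obtain N2 where N2:
    "\<And>n p q. N2 \<le> n \<Longrightarrow> p \<in> cbox (0,0) (1,1) \<Longrightarrow> q \<in> cbox (0,0) (1,1) \<Longrightarrow> dist p q \<le> 1 / real n
       \<Longrightarrow> \<bar>f p - f q\<bar> \<le> r / 3"
    by (rule uniformly_continuous_on_modulus_real[OF compact_uniformly_continuous[OF f compact_cbox],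
          of "r / 3"]) (use r in auto)
  have "\<bar>grid_riemann_sum f n - integral (cbox (0,0) (1,1)) f\<bar> \<le> 2 * (r / 3)" if n: "max N1 N2 \<le> n" for n
    unfolding grid_riemann_sum_def integral_prod_continuous[OF f, simplified]
  proof (rule iterated_riemann_sum_error_le[where g="\<lambda>x y. f (x, y)"])
    show "0 < n" using n N1(1) by simp
    show "continuous_on {0..1} (\<lambda>y. f (x, y))" if "x \<in> {0..1}" for x
      by (rule continuous_on_compose2[OF f]) (use that in \<open>auto intro!: continuous_intros simp: Q\<close>)
    show "\<bar>f (x, y) - f (x, y')\<bar> \<le> r / 3"
      if "x \<in> {0..1}" "y \<in> {0..1}" "y' \<in> {0..1}" "\<bar>y - y'\<bar> \<le> 1 / real n" for x y y'
      using that n by (intro N2) (auto simp: Q dist_Pair_Pair dist_real_def)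
    show "continuous_on {0..1} (\<lambda>x. integral {0..1} (\<lambda>y. f (x, y)))"
      using H by (simp add: H_def)
    show "\<bar>integral {0..1} (\<lambda>y. f (x, y)) - integral {0..1} (\<lambda>y. f (x', y))\<bar> \<le> r / 3"
      if "x \<in> {0..1}" "x' \<in> {0..1}" "\<bar>x - x'\<bar> \<le> 1 / real n" for x x'
      using that n N1(2)[of n x x'] by (simp add: H_def dist_real_def)
  qed
  thus "\<exists>N. \<forall>n\<ge>N. norm (grid_riemann_sum f n - integral (cbox (0,0) (1,1)) f) < r"
    using r by (intro exI[of _ "max N1 N2"]) force
qed

section \<open>Convergence to the uniform measure\<close>

lemma card_le_sum_sq_div:
  fixes h :: "'a \<Rightarrow> real"
  assumes "finite X" and "0 < \<epsilon>"
  shows "real (card {x\<in>X. \<epsilon> \<le> \<bar>h x\<bar>}) \<le> (\<Sum>x\<in>X. (h x)\<^sup>2) / \<epsilon>\<^sup>2"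
proof -
  have "real (card {x\<in>X. \<epsilon> \<le> \<bar>h x\<bar>}) * \<epsilon>\<^sup>2 = (\<Sum>x\<in>{x\<in>X. \<epsilon> \<le> \<bar>h x\<bar>}. \<epsilon>\<^sup>2)"
    by simp
  also have "\<dots> \<le> (\<Sum>x\<in>{x\<in>X. \<epsilon> \<le> \<bar>h x\<bar>}. (h x)\<^sup>2)"
    using assms(2) by (intro sum_mono) (simp add: abs_le_square_iff[symmetric])
  also have "\<dots> \<le> (\<Sum>x\<in>X. (h x)\<^sup>2)"
    using assms(1) by (intro sum_mono2) auto
  finally show ?thesis
    using assms(2) by (simp add: le_divide_eq)
qed

text \<open>Cauchy--Schwarz against the uniform measure on permutations.\<close>
lemma prob_R_pmf_sq_le:
  "(measure_pmf.prob (R_pmf n \<theta>) A)\<^sup>2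
     \<le> scaled_partition n (2 * \<theta>) / (scaled_partition n \<theta>)\<^sup>2 * (card (perms n \<inter> A) / fact n)"
proof -
  have "(\<Sum>\<pi>\<in>perms n \<inter> A. exp \<theta> ^ fixpts n \<pi>)\<^sup>2
      = (\<Sum>\<pi>\<in>perms n. exp \<theta> ^ fixpts n \<pi> * of_bool (\<pi> \<in> A))\<^sup>2"
    by (simp add: sum.inter_restrict finite_permutations)
  also have "\<dots> \<le> (\<Sum>\<pi>\<in>perms n. (exp \<theta> ^ fixpts n \<pi>)\<^sup>2) * (\<Sum>\<pi>\<in>perms n. (of_bool (\<pi> \<in> A))\<^sup>2)"
    by (rule Cauchy_Schwarz_ineq_sum)
  also have "(\<Sum>\<pi>\<in>perms n. (exp \<theta> ^ fixpts n \<pi>)\<^sup>2) = fact n * scaled_partition n (2 * \<theta>)"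
    by (simp add: sum_perms_exp_fixpts[symmetric] exp_double flip: power_mult)
       (simp add: power_mult[symmetric] mult.commute)
  also have "(\<Sum>\<pi>\<in>perms n. (of_bool (\<pi> \<in> A) :: real)\<^sup>2) = card (perms n \<inter> A)"
  proof -
    have "(\<Sum>\<pi>\<in>perms n. (of_bool (\<pi> \<in> A) :: real)\<^sup>2) = (\<Sum>\<pi>\<in>perms n. of_bool (\<pi> \<in> A))"
      by (intro sum.cong) auto
    thus ?thesis by (simp add: finite_permutations Int_def)
  qed
  finally have "(measure_pmf.prob (R_pmf n \<theta>) A)\<^sup>2
      \<le> fact n * scaled_partition n (2 * \<theta>) * card (perms n \<inter> A) / (fact n * scaled_partition n \<theta>)\<^sup>2"
    unfolding prob_R_pmf power_divide by (rule divide_right_mono) simp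
  also have "\<dots> = scaled_partition n (2 * \<theta>) / (scaled_partition n \<theta>)\<^sup>2 * (card (perms n \<inter> A) / fact n)"
    by (simp add: power2_eq_square)
  finally show ?thesis .
qed

lemma card_perms_riemann_deviation_le:
  fixes f :: "real \<times> real \<Rightarrow> real"
  assumes n: "0 < n" and \<epsilon>: "0 < \<epsilon>" and M: "\<And>p. p \<in> cbox (0,0) (1,1) \<Longrightarrow> \<bar>f p\<bar> \<le> M"
  shows "card {\<pi>\<in>perms n. \<epsilon> \<le> \<bar>perm_riemann_sum f n \<pi>
                                  - grid_riemann_sum f n\<bar>} / fact n
       \<le> 8 * M\<^sup>2 / (real n * \<epsilon>\<^sup>2)"
proof -
  define g where "g = (\<lambda>i j. f (real i / real n, real j / real n))"
  have dev: "perm_riemann_sum f n \<pi> - grid_riemann_sum f n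
      = ((\<Sum>i\<in>{1..n}. g i (\<pi> i)) - (\<Sum>i\<in>{1..n}. \<Sum>j\<in>{1..n}. g i j) / card {1..n}) / real n" for \<pi>
    using n by (simp add: g_def perm_riemann_sum_def grid_riemann_sum_def power2_eq_square field_simps)
  have "(\<Sum>\<pi>\<in>perms n. ((\<Sum>i\<in>{1..n}. g i (\<pi> i)) - (\<Sum>i\<in>{1..n}. \<Sum>j\<in>{1..n}. g i j) / card {1..n})\<^sup>2)
      \<le> 8 * real n * fact n * M\<^sup>2"
    using sum_permutes_sq_deviation_le[of "{1..n}" g M] M by (simp add: g_def cbox_Pair_iff)
  hence sq: "(\<Sum>\<pi>\<in>perms n. (perm_riemann_sum f n \<pi>
                                - grid_riemann_sum f n)\<^sup>2)
      \<le> 8 * fact n * M\<^sup>2 / real n"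
    unfolding dev using n
    by (simp add: power_divide sum_divide_distrib[symmetric] divide_le_eq power2_eq_square)
       (simp add: mult_ac)
  have "card {\<pi>\<in>perms n. \<epsilon> \<le> \<bar>perm_riemann_sum f n \<pi>
                                  - grid_riemann_sum f n\<bar>}
      \<le> (\<Sum>\<pi>\<in>perms n. (perm_riemann_sum f n \<pi>
                                - grid_riemann_sum f n)\<^sup>2) / \<epsilon>\<^sup>2"
    by (rule card_le_sum_sq_div[OF finite_permutations[OF finite_atLeastAtMost] \<epsilon>])
  also have "\<dots> \<le> 8 * fact n * M\<^sup>2 / real n / \<epsilon>\<^sup>2"
    by (rule divide_right_mono[OF sq]) simp
  finally show ?thesis
    by (simp add: divide_le_eq field_simps)
qed

lemma prob_R_pmf_riemann_deviation_sq_le: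
  fixes f :: "real \<times> real \<Rightarrow> real"
  assumes n: "0 < n" and \<epsilon>: "0 < \<epsilon>" and M: "\<And>p. p \<in> cbox (0,0) (1,1) \<Longrightarrow> \<bar>f p\<bar> \<le> M"
    and close: "\<bar>grid_riemann_sum f n - c\<bar> < \<epsilon> / 2"
  shows "(measure_pmf.prob (R_pmf n \<theta>)
            {\<pi>. \<epsilon> < \<bar>perm_riemann_sum f n \<pi> - c\<bar>})\<^sup>2
       \<le> scaled_partition n (2 * \<theta>) / (scaled_partition n \<theta>)\<^sup>2 * (8 * M\<^sup>2 / (real n * (\<epsilon> / 2)\<^sup>2))"
proof -
  define A where "A = {\<pi>. \<epsilon> < \<bar>perm_riemann_sum f n \<pi> - c\<bar>}"
  define D where "D = {\<pi>\<in>perms n. \<epsilon> / 2 \<le> \<bar>perm_riemann_sum f n \<pi>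
                                              - grid_riemann_sum f n\<bar>}"
  have "\<epsilon> / 2 \<le> \<bar>a - grid_riemann_sum f n\<bar>" if "\<epsilon> < \<bar>a - c\<bar>" for a
    using abs_triangle_ineq[of "a - grid_riemann_sum f n" "grid_riemann_sum f n - c"] that close
    by simp
  hence "perms n \<inter> A \<subseteq> D"
    unfolding A_def D_def by auto
  hence "card (perms n \<inter> A) \<le> card D"
    by (rule card_mono[rotated]) (simp add: D_def finite_permutations)
  hence "card (perms n \<inter> A) / fact n \<le> card D / fact n"
    by (simp add: divide_right_mono)
  also have "\<dots> \<le> 8 * M\<^sup>2 / (real n * (\<epsilon> / 2)\<^sup>2)"
    unfolding D_def using \<epsilon> by (intro card_perms_riemann_deviation_le[OF n _ M]) simp
  finally have "scaled_partition n (2 * \<theta>) / (scaled_partition n \<theta>)\<^sup>2 * (card (perms n \<inter> A) / fact n)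
      \<le> scaled_partition n (2 * \<theta>) / (scaled_partition n \<theta>)\<^sup>2 * (8 * M\<^sup>2 / (real n * (\<epsilon> / 2)\<^sup>2))"
    using scaled_partition_pos[of n] by (intro mult_left_mono) (simp_all add: less_imp_le)
  thus ?thesis
    using prob_R_pmf_sq_le[of n \<theta> A] unfolding A_def by linarith
qed

lemma conv_prob_uniform_R_pmf: "conv_prob_uniform (\<lambda>n. R_pmf n \<theta>)"
  unfolding conv_prob_uniform_def
proof (intro allI impI)
  fix f :: "real \<times> real \<Rightarrow> real" and \<epsilon> :: real
  assume f: "continuous_on (cbox (0,0) (1,1)) f" and \<epsilon>: "0 < \<epsilon>"
  define I where "I = integral (cbox (0,0) (1,1)) f"
  define P where "P = (\<lambda>n. measure_pmf.prob (R_pmf n \<theta>)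
            {\<pi>. \<epsilon> < \<bar>perm_riemann_sum f n \<pi> - I\<bar>})"
  obtain M where "\<forall>y\<in>f ` cbox (0,0) (1,1). norm y \<le> M"
    using compact_imp_bounded[OF compact_continuous_image[OF f compact_cbox]]
    unfolding bounded_iff by blast
  hence M: "\<And>p. p \<in> cbox (0,0) (1,1) \<Longrightarrow> \<bar>f p\<bar> \<le> M" by simp
  define B where "B = (\<lambda>n. scaled_partition n (2 * \<theta>) / (scaled_partition n \<theta>)\<^sup>2
                          * (8 * M\<^sup>2 / (\<epsilon> / 2)\<^sup>2) * (1 / real n))"
  have "B \<longlonglongrightarrow> exp (exp (2 * \<theta>)) * exp (-1) / (exp (exp \<theta>) * exp (-1))\<^sup>2 * (8 * M\<^sup>2 / (\<epsilon> / 2)\<^sup>2) * 0"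
    unfolding B_def by (intro tendsto_intros scaled_partition_LIMSEQ lim_inverse_n') simp
  hence sqrt_B: "(\<lambda>n. sqrt (B n)) \<longlonglongrightarrow> 0"
    using tendsto_real_sqrt by force
  have "eventually (\<lambda>n. \<bar>grid_riemann_sum f n - I\<bar> < \<epsilon> / 2) sequentially"
    using grid_riemann_sum_LIMSEQ[OF f] \<epsilon> unfolding I_def tendsto_iff dist_real_def
    by (meson half_gt_zero)
  with eventually_gt_at_top[of 0]
  have bounded: "eventually (\<lambda>n. P n \<le> sqrt (B n)) sequentially"
  proof eventually_elim
    case (elim n)
    hence "(P n)\<^sup>2
        \<le> scaled_partition n (2 * \<theta>) / (scaled_partition n \<theta>)\<^sup>2 * (8 * M\<^sup>2 / (real n * (\<epsilon> / 2)\<^sup>2))"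
      unfolding P_def by (intro prob_R_pmf_riemann_deviation_sq_le \<epsilon> M) auto
    also have "\<dots> = B n"
      by (simp add: B_def)
    finally show ?case by (rule real_le_rsqrt)
  qed
  have "P \<longlonglongrightarrow> 0"
    by (rule tendsto_sandwich[OF _ bounded tendsto_const sqrt_B]) (simp add: P_def)
  thus "(\<lambda>n. measure_pmf.prob (R_pmf n \<theta>) {\<pi>. \<epsilon> < \<bar>(1 / real n) *
      (\<Sum>i=1..n. f (real i / real n, real (\<pi> i) / real n)) - integral (cbox (0,0) (1,1)) f\<bar>}) \<longlonglongrightarrow> 0"
    unfolding P_def I_def perm_riemann_sum_def .
qed

theorem proposition1p8:
  fixes \<theta> :: real
  assumes "\<theta> \<noteq> 0"
  shows "weak_conv_m (\<lambda>n. distr (measure_pmf (R_pmf n \<theta>)) borel (\<lambda>\<pi>. real (fixpts n \<pi>)))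
                     (distr (measure_pmf (poisson_pmf (exp \<theta>))) borel real)
       \<and> (\<forall>k::nat. (\<lambda>n. measure_pmf.expectation (R_pmf n \<theta>) (\<lambda>\<pi>. real (fixpts n \<pi>) ^ k))
             \<longlonglongrightarrow> measure_pmf.expectation (poisson_pmf (exp \<theta>)) (\<lambda>m. real m ^ k))
       \<and> conv_prob_uniform (\<lambda>n. R_pmf n \<theta>)
       \<and> (\<forall>n\<ge>2. measure_pmf.prob (R_pmf n \<theta>) {\<pi>. \<pi> 1 = 1 \<and> \<pi> 2 = 2}
                / measure_pmf.prob (R_pmf n \<theta>) {\<pi>. \<pi> 1 = 2 \<and> \<pi> 2 = 1} = exp (2 * \<theta>)
              \<and> exp (2 * \<theta>) \<noteq> 1)"
proof (intro conjI allI impI)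
  show "weak_conv_m (\<lambda>n. distr (measure_pmf (R_pmf n \<theta>)) borel (\<lambda>\<pi>. real (fixpts n \<pi>)))
                    (distr (measure_pmf (poisson_pmf (exp \<theta>))) borel real)"
    by (rule weak_conv_fixpts_poisson)
  show "(\<lambda>n. measure_pmf.expectation (R_pmf n \<theta>) (\<lambda>\<pi>. real (fixpts n \<pi>) ^ k))
          \<longlonglongrightarrow> measure_pmf.expectation (poisson_pmf (exp \<theta>)) (\<lambda>m. real m ^ k)" for k
    by (rule moments_fixpts_LIMSEQ)
  show "conv_prob_uniform (\<lambda>n. R_pmf n \<theta>)"
    by (rule conv_prob_uniform_R_pmf)
  show "measure_pmf.prob (R_pmf n \<theta>) {\<pi>. \<pi> 1 = 1 \<and> \<pi> 2 = 2}
          / measure_pmf.prob (R_pmf n \<theta>) {\<pi>. \<pi> 1 = 2 \<and> \<pi> 2 = 1} = exp (2 * \<theta>)" if "2 \<le> n" for n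
    using prob_R_pmf_fix_12_eq[OF that, of \<theta>] prob_R_pmf_swap_12_pos[OF that, of \<theta>] by simp
  show "exp (2 * \<theta>) \<noteq> 1"
    using assms by simp
qed

end
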